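(* Let $n\ge 2$, and let $S$ be a semitransitive subsemigroup of $\mathcal{I}_n\setminus\mathcal{S}_n$ with $|S|\le 2n$. Let $e\in S$ be a non-zero idempotent and $\varphi\in eSe$. Then $\varphi$ either belongs to the group of units of the monoid $eSe$ (whose identity is $e$), or $\varphi$ is nilpotent (i.e. $\varphi^k=0$ for some $k\ge1$).
   Context: $\mathcal{I}_n$ denotes the symmetric inverse semigroup of all partial injective maps of $X=\{1,\dots,n\}$ to itself, with maps written on the right and composed left to right; $0$ denotes the empty map. $\mathcal{S}_n$ is the symmetric group on $X$. A semigroup $S$ of partial transformations of $X$ is semitransitive if for all $x,y\in X$ there is $\varphi\in S$ with $x\varphi=y$ or $y\varphi=x$. $eSe=\{e\sigma e:\sigma\in S\}$. *)

theory Defs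
  imports Main
begin

text \<open>Partial maps of X = {1..n} are modelled as maps nat \<rightharpoonup> nat.
  Maps act on the right and compose left to right: x(\<phi>\<psi>) = (x\<phi>)\<psi>.\<close>

definition pinj :: "nat \<Rightarrow> (nat \<rightharpoonup> nat) \<Rightarrow> bool" where
  "pinj n f \<longleftrightarrow> dom f \<subseteq> {1..n} \<and> ran f \<subseteq> {1..n} \<and> inj_on f (dom f)"

definition sym_inv :: "nat \<Rightarrow> (nat \<rightharpoonup> nat) set" where
  "sym_inv n = {f. pinj n f}"

definition sym_grp :: "nat \<Rightarrow> (nat \<rightharpoonup> nat) set" where
  "sym_grp n = {f. pinj n f \<and> dom f = {1..n} \<and> ran f = {1..n}}"

definition pcomp :: "(nat \<rightharpoonup> nat) \<Rightarrow> (nat \<rightharpoonup> nat) \<Rightarrow> (nat \<rightharpoonup> nat)" (infixl "\<cdot>" 70) where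
  "f \<cdot> g = g \<circ>\<^sub>m f"

fun ppow :: "(nat \<rightharpoonup> nat) \<Rightarrow> nat \<Rightarrow> (nat \<rightharpoonup> nat)" where
  "ppow f 0 = Some"
| "ppow f (Suc k) = ppow f k \<cdot> f"

definition subsemigroup :: "(nat \<rightharpoonup> nat) set \<Rightarrow> bool" where
  "subsemigroup S \<longleftrightarrow> (\<forall>f\<in>S. \<forall>g\<in>S. f \<cdot> g \<in> S)"

definition semitransitive :: "nat \<Rightarrow> (nat \<rightharpoonup> nat) set \<Rightarrow> bool" where
  "semitransitive n S \<longleftrightarrow>
     (\<forall>x\<in>{1..n}. \<forall>y\<in>{1..n}. \<exists>f\<in>S. f x = Some y \<or> f y = Some x)"

definition corner :: "(nat \<rightharpoonup> nat) \<Rightarrow> (nat \<rightharpoonup> nat) set \<Rightarrow> (nat \<rightharpoonup> nat) set" where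
  "corner e S = {e \<cdot> s \<cdot> e | s. s \<in> S}"

definition units_of_monoid :: "(nat \<rightharpoonup> nat) set \<Rightarrow> (nat \<rightharpoonup> nat) \<Rightarrow> (nat \<rightharpoonup> nat) set" where
  "units_of_monoid M e = {f \<in> M. \<exists>g\<in>M. f \<cdot> g = e \<and> g \<cdot> f = e}"

definition nilpotent_map :: "(nat \<rightharpoonup> nat) \<Rightarrow> bool" where
  "nilpotent_map f \<longleftrightarrow> (\<exists>k\<ge>1. ppow f k = Map.empty)"

end

theory Submission
  imports Defs
begin

(* Let f = \<phi>^m be the idempotent power of \<phi>; it lies in the corner eSe, so
   dom f \<subseteq> dom e.  If f = 0 (the empty map) then \<phi> is nilpotent, and if f = e then \<phi>^(2m-1) is an
   inverse of \<phi> in eSe.  The remaining case 0 \<noteq> f \<noteq> e is impossible: then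
   F = dom f, D = dom e, X = {1..n} form a chain of nonempty strict inclusions
   F \<subset> D \<subset> X (D \<noteq> X because S contains no permutation), and counting elements of S
   gives |S| \<ge> 2|F| + 2|D-F| + 2|X-D| + 1 = 2n + 1.
   For the count, choose base points p \<in> F, b \<in> D-F, a \<in> X-D from which S reaches
   every point of the respective block.  Each point y of a block is "witnessed" twice:
   once by a map sending a base point to y inside the right block, and once, via
   semitransitivity, by a map linking y to a base point of another block.  These
   witnesses fall into nine pairwise disjoint families of maps, and the empty map
   (which lies in S as soon as S contains a non-identity idempotent) is a tenth. *)

lemma pcomp_Some_iff: "(f \<cdot> g) x = Some z \<longleftrightarrow> (\<exists>y. f x = Some y \<and> g y = Some z)"
  by (simp add: pcomp_def map_comp_Some_iff)

lemma pcomp_apply: "(f \<cdot> g) x = (case f x of None \<Rightarrow> None | Some y \<Rightarrow> g y)"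
  by (simp add: pcomp_def map_comp_def)

lemma pcomp_assoc [simp]: "(f \<cdot> g) \<cdot> h = f \<cdot> (g \<cdot> h)"
  by (rule ext) (simp add: pcomp_apply split: option.split)

lemma pcomp_Some_left [simp]: "Some \<cdot> g = g"
  by (rule ext) (simp add: pcomp_apply)

lemma pcomp_Some_right [simp]: "g \<cdot> Some = g"
  by (rule ext) (simp add: pcomp_apply split: option.split)

lemma ppow_add: "ppow f (a + b) = ppow f a \<cdot> ppow f b"
  by (induction b) auto

lemma ppow_1 [simp]: "ppow f 1 = f"
  using ppow.simps(2)[of f 0] by simp

lemma ppow_Suc_left: "ppow f (Suc k) = f \<cdot> ppow f k"
  using ppow_add[of f 1 k] by simp

lemma dom_pcomp_subset: "dom (f \<cdot> g) \<subseteq> dom f"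
  by (auto simp: pcomp_apply split: option.splits)

lemma ran_pcomp_subset: "ran (f \<cdot> g) \<subseteq> ran g"
  by (auto simp: ran_def pcomp_Some_iff)

lemma card_ran_eq_card_dom:
  assumes "inj_on m (dom m)" shows "card (ran m) = card (dom m)"
proof -
  have "ran m = (\<lambda>x. the (m x)) ` dom m" by (force simp: ran_def dom_def image_def)
  moreover have "inj_on (\<lambda>x. the (m x)) (dom m)"
    using assms unfolding inj_on_def by (metis domIff option.expand)
  ultimately show ?thesis by (simp add: card_image)
qed

lemma finite_sym_inv: "finite (sym_inv n)"
proof -
  have "sym_inv n \<subseteq> (\<Union>A\<in>Pow {1..n}. {m. dom m = A \<and> ran m \<subseteq> {1..n}})"
    by (auto simp: sym_inv_def pinj_def)
  moreover have "finite (\<Union>A\<in>Pow {1..n}. {m. dom m = A \<and> ran m \<subseteq> {1..n}})"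
    by (intro finite_UN_I) (auto intro: finite_set_of_finite_maps finite_subset)
  ultimately show ?thesis by (rule finite_subset)
qed

text \<open>If all positive powers of \<phi> lie in a finite set, some positive power is idempotent:
  the powers become periodic, and a multiple of the period beyond the preperiod works.\<close>

lemma idempotent_power:
  assumes powers: "\<forall>k\<ge>1. ppow \<phi> k \<in> A" and "finite A"
  shows "\<exists>m\<ge>1. ppow \<phi> m \<cdot> ppow \<phi> m = ppow \<phi> m"
proof -
  have "\<not> inj_on (ppow \<phi>) {1..card A + 1}"
  proof
    assume "inj_on (ppow \<phi>) {1..card A + 1}"
    moreover have "ppow \<phi> ` {1..card A + 1} \<subseteq> A" using powers by auto
    ultimately show False using card_inj_on_le[OF _ _ \<open>finite A\<close>] by fastforce
  qed
  then obtain i j where ij: "1 \<le> i" "i < j" "ppow \<phi> i = ppow \<phi> j"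
    unfolding inj_on_def by (metis atLeastAtMost_iff linorder_neqE_nat)
  obtain p where "p \<ge> 1" "i + p = j"
    using less_imp_add_positive[OF ij(2)] by (auto simp: Suc_le_eq)
  then have loop: "ppow \<phi> (i + p) = ppow \<phi> i" using ij(3) by simp
  have period: "ppow \<phi> (i + c + t * p) = ppow \<phi> (i + c)" for c t
  proof (induction t)
    case (Suc t)
    have "ppow \<phi> (i + c + Suc t * p) = ppow \<phi> (i + p) \<cdot> ppow \<phi> (c + t * p)"
      by (simp add: ppow_add[symmetric] algebra_simps)
    also have "\<dots> = ppow \<phi> (i + c + t * p)"
      by (simp add: loop ppow_add[symmetric] algebra_simps)
    finally show ?case using Suc by simp
  qed simp
  have "i \<le> i * p" using \<open>p \<ge> 1\<close> by simp
  then have "ppow \<phi> (i * p + i * p) = ppow \<phi> (i * p)"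
    using period[of "i * p - i" i] by simp
  then show ?thesis using \<open>i \<le> i * p\<close> ij(1) by (intro exI[of _ "i * p"]) (simp add: ppow_add)
qed

lemma unit_if_power_identity:
  assumes powers: "\<forall>k\<ge>1. ppow \<phi> k \<in> M"
    and "m \<ge> 1" and "ppow \<phi> m = e" and "e \<cdot> e = e"
  shows "\<phi> \<in> units_of_monoid M e"
proof -
  define \<psi> where "\<psi> = ppow \<phi> (2 * m - 1)"
  have twice: "ppow \<phi> (2 * m) = e"
    using assms(3,4) by (simp add: mult_2 ppow_add)
  have "\<phi> \<cdot> \<psi> = ppow \<phi> (Suc (2 * m - 1))" by (simp only: \<psi>_def ppow_Suc_left)
  moreover have "\<psi> \<cdot> \<phi> = ppow \<phi> (Suc (2 * m - 1))" by (simp add: \<psi>_def)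
  moreover have "Suc (2 * m - 1) = 2 * m" using \<open>m \<ge> 1\<close> by simp
  moreover have "\<phi> \<in> M" "\<psi> \<in> M"
    using powers[rule_format, of 1] powers[rule_format, of "2 * m - 1"] \<open>m \<ge> 1\<close>
    by (auto simp: \<psi>_def)
  ultimately show ?thesis using twice unfolding units_of_monoid_def by auto
qed

lemma card_le_by_witnesses:
  assumes "finite W" and "\<forall>y\<in>R. \<exists>w\<in>W. P w y"
    and "\<And>w y y'. w \<in> W \<Longrightarrow> P w y \<Longrightarrow> P w y' \<Longrightarrow> y = y'"
  shows "card R \<le> card W"
proof -
  have "\<forall>y\<in>R. \<exists>w. w \<in> W \<and> P w y" using assms(2) by blast
  then obtain g where g: "\<forall>y\<in>R. g y \<in> W \<and> P (g y) y" using bchoice by meson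
  have "inj_on g R"
  proof (rule inj_onI)
    fix y y' assume "y \<in> R" "y' \<in> R" "g y = g y'"
    then show "y = y'" using g assms(3) by metis
  qed
  moreover have "g ` R \<subseteq> W" using g by blast
  ultimately show ?thesis using card_inj_on_le[OF _ _ \<open>finite W\<close>] by blast
qed

definition leaving :: "(nat \<rightharpoonup> nat) set \<Rightarrow> nat \<Rightarrow> nat set \<Rightarrow> (nat \<rightharpoonup> nat) set" where
  "leaving T q R = {\<phi> \<in> T. \<exists>y\<in>R. \<phi> q = Some y}"

definition entering :: "(nat \<rightharpoonup> nat) set \<Rightarrow> nat \<Rightarrow> nat set \<Rightarrow> (nat \<rightharpoonup> nat) set" where
  "entering T q R = {\<phi> \<in> T. \<exists>x\<in>R. \<phi> x = Some q}"

definition within :: "(nat \<rightharpoonup> nat) set \<Rightarrow> nat set \<Rightarrow> nat set \<Rightarrow> (nat \<rightharpoonup> nat) set" where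
  "within T A B = {\<phi> \<in> T. dom \<phi> \<subseteq> A \<and> ran \<phi> \<subseteq> B}"

lemma card_le_leaving:
  assumes "finite T" and "\<forall>y\<in>R. \<exists>\<phi>\<in>T. \<phi> q = Some y"
  shows "card R \<le> card (leaving T q R)"
proof (rule card_le_by_witnesses[where P = "\<lambda>\<phi> y. \<phi> q = Some y"])
  show "finite (leaving T q R)" using assms(1) by (simp add: leaving_def)
  show "\<forall>y\<in>R. \<exists>\<phi>\<in>leaving T q R. \<phi> q = Some y" using assms(2) unfolding leaving_def by blast
qed simp

text \<open>Two-sided version: each point of R is reached from q, or mapped to q, by a map
  from T1 resp. T2; the maps of T2 are injective, so they determine the point.\<close>

lemma card_le_leaving_entering:
  assumes "finite T1" "finite T2" and inj: "\<forall>\<phi>\<in>T2. inj_on \<phi> (dom \<phi>)"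
    and linked: "\<forall>y\<in>R. (\<exists>\<phi>\<in>T1. \<phi> q = Some y) \<or> (\<exists>\<phi>\<in>T2. \<phi> y = Some q)"
  shows "card R \<le> card (leaving T1 q R) + card (entering T2 q R)"
proof -
  let ?R1 = "{y\<in>R. \<exists>\<phi>\<in>T1. \<phi> q = Some y}" and ?R2 = "{y\<in>R. \<exists>\<phi>\<in>T2. \<phi> y = Some q}"
  have "card ?R1 \<le> card (leaving T1 q R)"
  proof (rule card_le_by_witnesses[where P = "\<lambda>\<phi> y. \<phi> q = Some y"])
    show "finite (leaving T1 q R)" using assms(1) by (simp add: leaving_def)
    show "\<forall>y\<in>?R1. \<exists>\<phi>\<in>leaving T1 q R. \<phi> q = Some y" unfolding leaving_def by blast
  qed simp
  moreover have "card ?R2 \<le> card (entering T2 q R)"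
  proof (rule card_le_by_witnesses[where P = "\<lambda>\<phi> y. \<phi> y = Some q"])
    fix \<phi> y y' assume "\<phi> \<in> entering T2 q R" and "\<phi> y = Some q" "\<phi> y' = Some q"
    then have "inj_on \<phi> (dom \<phi>)" using inj by (simp add: entering_def)
    with \<open>\<phi> y = Some q\<close> \<open>\<phi> y' = Some q\<close> show "y = y'"
      by (metis domI inj_onD)
  next
    show "finite (entering T2 q R)" using assms(2) by (simp add: entering_def)
    show "\<forall>y\<in>?R2. \<exists>\<phi>\<in>entering T2 q R. \<phi> y = Some q" unfolding entering_def by blast
  qed
  moreover have "R = ?R1 \<union> ?R2" using linked by blast
  then have "card R \<le> card ?R1 + card ?R2" using card_Un_le[of ?R1 ?R2] by simp
  ultimately show ?thesis by linarith
qed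

lemma card_Union_sorted_disjnt:
  assumes "\<forall>A\<in>set As. finite A" and "sorted_wrt disjnt As"
  shows "card (\<Union>(set As)) = sum_list (map card As)"
  using assms
proof (induction As)
  case (Cons A As)
  then have "A \<inter> \<Union>(set As) = {}" by (auto simp: disjnt_def)
  with Cons show ?case by (simp add: card_Un_disjoint)
qed simp

lemma corner_subset:
  assumes "subsemigroup S" "e \<in> S" shows "corner e S \<subseteq> S"
  using assms by (auto simp: corner_def subsemigroup_def)

lemma corner_closed:
  assumes "subsemigroup S" "e \<in> S" "e \<cdot> e = e" "\<phi> \<in> corner e S" "\<psi> \<in> corner e S"
  shows "\<phi> \<cdot> \<psi> \<in> corner e S"
proof -
  obtain s t where st: "s \<in> S" "t \<in> S" "\<phi> = e \<cdot> s \<cdot> e" "\<psi> = e \<cdot> t \<cdot> e"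
    using assms(4,5) unfolding corner_def by blast
  have "s \<cdot> e \<cdot> t \<in> S" using st(1,2) assms(1,2) by (simp add: subsemigroup_def)
  moreover have "\<phi> \<cdot> \<psi> = e \<cdot> (s \<cdot> e \<cdot> t) \<cdot> e"
    using st(3,4) assms(3) pcomp_assoc[of e e "t \<cdot> e"] by simp
  ultimately show ?thesis unfolding corner_def by blast
qed

lemma corner_powers:
  assumes "subsemigroup S" "e \<in> S" "e \<cdot> e = e" "\<phi> \<in> corner e S"
  shows "\<forall>k\<ge>1. ppow \<phi> k \<in> corner e S"
proof (intro allI impI)
  fix k :: nat assume "k \<ge> 1"
  then show "ppow \<phi> k \<in> corner e S"
  proof (induction k rule: dec_induct)
    case (step k)
    then show ?case using corner_closed[OF assms(1-3) _ assms(4)] by simp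
  qed (use assms(4) in simp)
qed

lemma dom_corner: "\<phi> \<in> corner e S \<Longrightarrow> dom \<phi> \<subseteq> dom e"
  using dom_pcomp_subset unfolding corner_def by fastforce

locale proper_semitransitive =
  fixes n :: nat and S :: "(nat \<rightharpoonup> nat) set"
  assumes S_subset: "S \<subseteq> sym_inv n - sym_grp n"
    and S_closed: "subsemigroup S"
    and S_semitransitive: "semitransitive n S"
begin

lemma closed: "s \<in> S \<Longrightarrow> t \<in> S \<Longrightarrow> s \<cdot> t \<in> S"
  using S_closed by (auto simp: subsemigroup_def)

lemma S_pinj: "s \<in> S \<Longrightarrow> pinj n s"
  using S_subset by (auto simp: sym_inv_def)

lemma dom_subset: "s \<in> S \<Longrightarrow> dom s \<subseteq> {1..n}"
  using S_pinj by (auto simp: pinj_def)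

lemma ran_subset: "s \<in> S \<Longrightarrow> ran s \<subseteq> {1..n}"
  using S_pinj by (auto simp: pinj_def)

lemma inj_dom: "s \<in> S \<Longrightarrow> inj_on s (dom s)"
  using S_pinj by (auto simp: pinj_def)

lemma injD: "s \<in> S \<Longrightarrow> s x = Some z \<Longrightarrow> s x' = Some z \<Longrightarrow> x = x'"
  using inj_dom[of s] unfolding inj_on_def by (metis domI)

lemma finite_S: "finite S"
  using S_subset finite_sym_inv finite_subset by blast

lemma no_permutation: "s \<in> S \<Longrightarrow> dom s = {1..n} \<Longrightarrow> ran s = {1..n} \<Longrightarrow> False"
  using S_subset S_pinj by (auto simp: sym_grp_def)

lemma linked: "x \<in> {1..n} \<Longrightarrow> y \<in> {1..n} \<Longrightarrow> \<exists>s\<in>S. s x = Some y \<or> s y = Some x"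
  using S_semitransitive unfolding semitransitive_def by blast

lemma within_X: "within S {1..n} {1..n} = S"
  using dom_subset ran_subset by (auto simp: within_def)

lemma finite_within: "finite (within S A B)"
  using finite_S by (auto simp: within_def)

lemma inj_within: "\<forall>\<phi>\<in>within S A B. inj_on \<phi> (dom \<phi>)"
  using inj_dom by (auto simp: within_def)

lemma idempotent_apply:
  assumes "g \<in> S" "g \<cdot> g = g" shows "g x = Some y \<longleftrightarrow> x \<in> dom g \<and> y = x"
proof -
  have "y = x" if "g x = Some y" for y
  proof -
    from that obtain z where "g x = Some z" "g z = Some y"
      using assms(2) pcomp_Some_iff[of g g x y] by auto
    then show "y = x" using that injD[OF assms(1)] by auto
  qed
  then show ?thesis by auto
qed

lemma ran_idempotent: "g \<in> S \<Longrightarrow> g \<cdot> g = g \<Longrightarrow> ran g = dom g"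
  using idempotent_apply by (auto simp: ran_def)

lemma idempotent_eqI:
  assumes "g \<in> S" "g \<cdot> g = g" "h \<in> S" "h \<cdot> h = h" "dom g = dom h"
  shows "g = h"
proof (rule ext)
  fix x show "g x = h x"
    using idempotent_apply[OF assms(1,2), of x] idempotent_apply[OF assms(3,4), of x] assms(5)
    by (cases "g x"; cases "h x") auto
qed

lemma restrict_left:
  assumes "g \<in> S" "g \<cdot> g = g" "s \<in> within S A B" "s x = Some y" "x \<in> dom g"
  shows "g \<cdot> s \<in> within S (dom g) B" and "(g \<cdot> s) x = Some y"
  using assms closed dom_pcomp_subset[of g s] ran_pcomp_subset[of g s]
  by (auto simp: within_def pcomp_Some_iff idempotent_apply)

lemma restrict_right:
  assumes "h \<in> S" "h \<cdot> h = h" "s \<in> within S A B" "s x = Some y" "y \<in> dom h"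
  shows "s \<cdot> h \<in> within S A (dom h)" and "(s \<cdot> h) x = Some y"
  using assms closed dom_pcomp_subset[of s h] ran_pcomp_subset[of s h] ran_idempotent[of h]
  by (auto simp: within_def pcomp_Some_iff idempotent_apply)

lemma restrict_left_link:
  assumes "g \<in> S" "g \<cdot> g = g" "s \<in> S" "s x = Some y" "x \<in> dom g"
  shows "\<exists>\<phi>\<in>within S (dom g) {1..n}. \<phi> x = Some y"
proof -
  have "s \<in> within S {1..n} {1..n}" using within_X assms(3) by simp
  from restrict_left[OF assms(1,2) this assms(4,5)] show ?thesis by blast
qed

lemma restrict_right_link:
  assumes "h \<in> S" "h \<cdot> h = h" "s \<in> S" "s x = Some y" "y \<in> dom h"
  shows "\<exists>\<phi>\<in>within S {1..n} (dom h). \<phi> x = Some y"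
proof -
  have "s \<in> within S {1..n} {1..n}" using within_X assms(3) by simp
  from restrict_right[OF assms(1,2) this assms(4,5)] show ?thesis by blast
qed

lemma restrict_both_link:
  assumes g: "g \<in> S" "g \<cdot> g = g" and h: "h \<in> S" "h \<cdot> h = h"
    and "s \<in> S" "s x = Some y" "x \<in> dom g" "y \<in> dom h"
  shows "\<exists>\<phi>\<in>within S (dom g) (dom h). \<phi> x = Some y"
proof -
  have "s \<in> within S {1..n} {1..n}" using within_X \<open>s \<in> S\<close> by simp
  from restrict_right[OF h this assms(6,8)]
  have "s \<cdot> h \<in> within S {1..n} (dom h)" "(s \<cdot> h) x = Some y" .
  from restrict_left[OF g this assms(7)] show ?thesis by blast
qed

lemma base_point:
  assumes "L \<noteq> {}" "L \<subseteq> {1..n}"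
  shows "\<exists>m\<in>L. \<forall>y\<in>L. \<exists>s\<in>S. s m = Some y"
proof -
  have "finite L" using assms(2) finite_subset by blast
  then show ?thesis using assms
  proof (induction L rule: finite_ne_induct)
    case (singleton x)
    then show ?case using linked[of x x] by auto
  next
    case (insert x L)
    then obtain m where m: "m \<in> L" "\<forall>y\<in>L. \<exists>s\<in>S. s m = Some y" by auto
    have "x \<in> {1..n}" "m \<in> {1..n}" using insert.prems m(1) by auto
    then obtain s where s: "s \<in> S" "s x = Some m \<or> s m = Some x"
      using linked by blast
    show ?case
    proof (cases "s x = Some m")
      case True
      have "\<exists>u\<in>S. u x = Some y" if y: "y \<in> L" for y
      proof -
        obtain t where t: "t \<in> S" "t m = Some y" using m(2) y by blast
        then have "s \<cdot> t \<in> S" using s(1) closed by blast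
        moreover have "(s \<cdot> t) x = Some y" using True t(2) by (auto simp: pcomp_Some_iff)
        ultimately show ?thesis by blast
      qed
      moreover obtain u where "u \<in> S" "u x = Some x" using linked \<open>x \<in> {1..n}\<close> by blast
      ultimately show ?thesis by auto
    next
      case False
      then show ?thesis using m s by auto
    qed
  qed
qed

text \<open>An element \<mu> of minimal rank in S has its range inside every domain and its
  domain inside every range, since composing with any s cannot lower the rank.\<close>

lemma min_rank_ran_subset_dom:
  assumes "\<mu> \<in> S" "\<forall>t\<in>S. card (dom \<mu>) \<le> card (dom t)" "s \<in> S"
  shows "ran \<mu> \<subseteq> dom s"
proof
  fix y assume "y \<in> ran \<mu>"
  then obtain x where x: "\<mu> x = Some y" by (auto simp: ran_def)
  have "finite (dom \<mu>)" using dom_subset[OF assms(1)] finite_subset by blast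
  moreover have "card (dom \<mu>) \<le> card (dom (\<mu> \<cdot> s))" using assms closed by blast
  ultimately have "dom (\<mu> \<cdot> s) = dom \<mu>" by (rule card_seteq[OF _ dom_pcomp_subset])
  then have "x \<in> dom (\<mu> \<cdot> s)" using x by auto
  then show "y \<in> dom s" using x by (auto simp: pcomp_apply)
qed

lemma min_rank_dom_subset_ran:
  assumes "\<mu> \<in> S" "\<forall>t\<in>S. card (dom \<mu>) \<le> card (dom t)" "s \<in> S"
  shows "dom \<mu> \<subseteq> ran s"
proof
  fix z assume "z \<in> dom \<mu>"
  then obtain v where v: "\<mu> z = Some v" by auto
  have "finite (ran \<mu>)" using ran_subset[OF assms(1)] finite_subset by blast
  moreover have "card (ran \<mu>) \<le> card (ran (s \<cdot> \<mu>))"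
    using assms closed[OF assms(3,1)] card_ran_eq_card_dom[OF inj_dom] by metis
  ultimately have "ran (s \<cdot> \<mu>) = ran \<mu>" by (rule card_seteq[OF _ ran_pcomp_subset])
  then have "v \<in> ran (s \<cdot> \<mu>)" using v by (auto simp: ran_def)
  then obtain w u where "s w = Some u" "\<mu> u = Some v" by (auto simp: ran_def pcomp_Some_iff)
  then show "z \<in> ran s" using injD[OF assms(1) _ v] by (auto simp: ran_def)
qed

text \<open>If S contains an idempotent that is not the identity of X, then S contains the
  empty map: otherwise an element \<mu> of minimal rank and a point y outside dom e would
  contradict semitransitivity.\<close>

lemma empty_map_mem:
  assumes e: "e \<in> S" "e \<cdot> e = e" and "dom e \<noteq> {1..n}"
  shows "Map.empty \<in> S"
proof -
  obtain \<mu> where \<mu>: "\<mu> \<in> S" "\<forall>t\<in>S. card (dom \<mu>) \<le> card (dom t)"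
    using ex_has_least_nat[of "\<lambda>s. s \<in> S" e "\<lambda>s. card (dom s)"] e(1) by blast
  obtain y where y: "y \<in> {1..n}" "y \<notin> dom e" using assms(3) dom_subset[OF e(1)] by blast
  have "dom \<mu> = {}"
  proof (rule ccontr)
    assume "dom \<mu> \<noteq> {}"
    then obtain z x where "\<mu> z = Some x" by (metis domD ex_in_conv)
    then have "x \<in> ran \<mu>" by (rule ranI)
    then have x: "x \<in> ran \<mu>" "x \<in> dom \<mu>" "x \<in> {1..n}"
      using min_rank_ran_subset_dom[OF \<mu> \<mu>(1)] ran_subset[OF \<mu>(1)] by auto
    obtain s where s: "s \<in> S" "s x = Some y \<or> s y = Some x" using linked[OF x(3) y(1)] by blast
    show False
    proof (cases "s x = Some y")
      case True
      have "x \<in> dom (s \<cdot> e)" using min_rank_ran_subset_dom[OF \<mu> closed[OF s(1) e(1)]] x(1) by blast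
      then show False using True y(2) by (auto simp: pcomp_apply)
    next
      case False
      then have sy: "s y = Some x" using s(2) by simp
      have "x \<in> ran (e \<cdot> s)" using min_rank_dom_subset_ran[OF \<mu> closed[OF e(1) s(1)]] x(2) by blast
      then obtain w u where "e w = Some u" "s u = Some x" by (auto simp: ran_def pcomp_Some_iff)
      then show False using idempotent_apply[OF e] injD[OF s(1) _ sy] y(2) by auto
    qed
  qed
  then show ?thesis using \<mu>(1) by simp
qed

end

locale nested_idempotents = proper_semitransitive +
  fixes e f :: "nat \<rightharpoonup> nat" and p b a :: nat
  assumes e: "e \<in> S" "e \<cdot> e = e" and f: "f \<in> S" "f \<cdot> f = f"
    and dom_f_subset: "dom f \<subseteq> dom e"
    and p: "p \<in> dom f" "\<forall>y\<in>dom f. \<exists>s\<in>S. s p = Some y"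
    and b: "b \<in> dom e - dom f" "\<forall>y\<in>dom e - dom f. \<exists>s\<in>S. s b = Some y"
    and a: "a \<in> {1..n} - dom e" "\<forall>y\<in>{1..n} - dom e. \<exists>s\<in>S. s a = Some y"
begin

abbreviation "X \<equiv> {1..n}"
abbreviation "D \<equiv> dom e"
abbreviation "F \<equiv> dom f"

lemma count_F_from_p: "card F \<le> card (leaving (within S F F) p F)"
proof (rule card_le_leaving[OF finite_within], intro ballI)
  fix y assume "y \<in> F"
  then obtain s where "s \<in> S" "s p = Some y" using p by blast
  then show "\<exists>\<phi>\<in>within S F F. \<phi> p = Some y"
    using restrict_both_link[OF f f] p(1) \<open>y \<in> F\<close> by blast
qed

lemma count_DF_from_b: "card (D - F) \<le> card (leaving (within S D D) b (D - F))"
proof (rule card_le_leaving[OF finite_within], intro ballI)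
  fix y assume "y \<in> D - F"
  then obtain s where "s \<in> S" "s b = Some y" using b by blast
  then show "\<exists>\<phi>\<in>within S D D. \<phi> b = Some y"
    using restrict_both_link[OF e e] b(1) \<open>y \<in> D - F\<close> by blast
qed

lemma count_XD_from_a: "card (X - D) \<le> card (leaving S a (X - D))"
  using card_le_leaving[OF finite_S a(2)] .

lemma count_F_via_a:
  "card F \<le> card (leaving (within S X F) a F) + card (entering (within S F X) a F)"
proof (rule card_le_leaving_entering[OF finite_within finite_within inj_within], intro ballI)
  fix y assume y: "y \<in> F"
  then have "a \<in> X" "y \<in> X" using a(1) dom_f_subset dom_subset[OF e(1)] by blast+
  then obtain s where s: "s \<in> S" "s a = Some y \<or> s y = Some a" using linked by blast
  then show "(\<exists>\<phi>\<in>within S X F. \<phi> a = Some y) \<or> (\<exists>\<phi>\<in>within S F X. \<phi> y = Some a)"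
    using s(2) restrict_right_link[OF f s(1)] restrict_left_link[OF f s(1)] y by blast
qed

lemma count_XD_via_b:
  "card (X - D) \<le> card (leaving (within S D X) b (X - D)) + card (entering (within S X D) b (X - D))"
proof (rule card_le_leaving_entering[OF finite_within finite_within inj_within], intro ballI)
  fix y assume y: "y \<in> X - D"
  then have "b \<in> X" "y \<in> X" using b(1) dom_subset[OF e(1)] by blast+
  then obtain s where s: "s \<in> S" "s b = Some y \<or> s y = Some b" using linked by blast
  then show "(\<exists>\<phi>\<in>within S D X. \<phi> b = Some y) \<or> (\<exists>\<phi>\<in>within S X D. \<phi> y = Some b)"
    using s(2) restrict_left_link[OF e s(1)] restrict_right_link[OF e s(1)] b(1) by blast
qed

lemma count_DF_via_p:
  "card (D - F) \<le> card (leaving (within S F D) p (D - F)) + card (entering (within S D F) p (D - F))"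
proof (rule card_le_leaving_entering[OF finite_within finite_within inj_within], intro ballI)
  fix y assume y: "y \<in> D - F"
  then have "p \<in> X" "y \<in> X" using p(1) dom_f_subset dom_subset[OF e(1)] by blast+
  then obtain s where s: "s \<in> S" "s p = Some y \<or> s y = Some p" using linked by blast
  have "p \<in> D" "y \<in> D" using p(1) dom_f_subset y by blast+
  then show "(\<exists>\<phi>\<in>within S F D. \<phi> p = Some y) \<or> (\<exists>\<phi>\<in>within S D F. \<phi> y = Some p)"
    using s(2) restrict_both_link[OF f e s(1)] restrict_both_link[OF e f s(1)] p(1) by blast
qed

definition witness_families :: "(nat \<rightharpoonup> nat) set list" where
  "witness_families =
    [leaving (within S F F) p F, leaving (within S D D) b (D - F), leaving S a (X - D),
     leaving (within S X F) a F, entering (within S F X) a F,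
     leaving (within S D X) b (X - D), entering (within S X D) b (X - D),
     leaving (within S F D) p (D - F), entering (within S D F) p (D - F),
     {Map.empty}]"

text \<open>The families are pairwise disjoint: they are told apart by the image of a base
  point or by the blocks containing domain and range.\<close>

lemma witness_families_disjoint: "sorted_wrt disjnt witness_families"
  using p(1) b(1) a(1) dom_f_subset
  unfolding witness_families_def leaving_def entering_def within_def disjnt_def
  by simp (blast intro: domI ranI)

lemma witness_families_subset: "\<forall>W\<in>set witness_families. W \<subseteq> S"
proof -
  have "D \<noteq> X" using a(1) by blast
  then have "Map.empty \<in> S" using empty_map_mem[OF e] by simp
  then show ?thesis by (auto simp: witness_families_def leaving_def entering_def within_def)
qed

theorem card_S_lower_bound: "2 * n + 1 \<le> card S"
proof -
  have fin: "\<forall>W\<in>set witness_families. finite W"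
    using witness_families_subset finite_S finite_subset by blast
  have "sum_list (map card witness_families) = card (\<Union>(set witness_families))"
    using card_Union_sorted_disjnt[OF fin witness_families_disjoint] by simp
  also have "\<dots> \<le> card S"
    using witness_families_subset by (intro card_mono[OF finite_S]) blast
  finally have sum: "sum_list (map card witness_families) \<le> card S" .
  have DX: "D \<subseteq> X" using dom_subset[OF e(1)] .
  then have finD: "finite D" using finite_subset by blast
  have blocks: "card (D - F) = card D - card F" "card (X - D) = card X - card D"
    "card F \<le> card D" "card D \<le> card X"
    using card_Diff_subset[OF finite_subset[OF dom_f_subset finD] dom_f_subset]
      card_Diff_subset[OF finD DX] card_mono[OF finD dom_f_subset] card_mono[OF finite_atLeastAtMost DX]
    by simp_all
  have sizes: "card {Map.empty :: nat \<rightharpoonup> nat} = 1" "card X = n" by simp_all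
  show ?thesis
    using sum[unfolded witness_families_def list.map sum_list_simps] sizes blocks
      count_F_from_p count_DF_from_b count_XD_from_a count_F_via_a count_XD_via_b count_DF_via_p
    by linarith
qed

end

context proper_semitransitive
begin

theorem card_bound_nested_idempotents:
  assumes e: "e \<in> S" "e \<cdot> e = e" and f: "f \<in> S" "f \<cdot> f = f"
    and "f \<noteq> Map.empty" "f \<noteq> e" "dom f \<subseteq> dom e"
  shows "2 * n + 1 \<le> card S"
proof -
  have DX: "dom e \<subseteq> {1..n}" using dom_subset[OF e(1)] .
  have "dom f \<noteq> {}" using \<open>f \<noteq> Map.empty\<close> by simp
  from base_point[OF this subset_trans[OF assms(7) DX]]
  obtain p where p: "p \<in> dom f" "\<forall>y\<in>dom f. \<exists>s\<in>S. s p = Some y" by blast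
  have "dom e - dom f \<noteq> {}" using idempotent_eqI[OF f e] assms(6,7) by blast
  from base_point[OF this] obtain b
    where b: "b \<in> dom e - dom f" "\<forall>y\<in>dom e - dom f. \<exists>s\<in>S. s b = Some y"
    using DX by blast
  have "{1..n} - dom e \<noteq> {}"
    using no_permutation[OF e(1)] ran_idempotent[OF e] DX by blast
  from base_point[OF this] obtain a
    where a: "a \<in> {1..n} - dom e" "\<forall>y\<in>{1..n} - dom e. \<exists>s\<in>S. s a = Some y"
    by blast
  interpret nested_idempotents n S e f p b a
    using e f assms(7) p b a by unfold_locales
  show ?thesis by (rule card_S_lower_bound)
qed

end

theorem lemma3p1:
  fixes n :: nat and S :: "(nat \<rightharpoonup> nat) set" and e \<phi> :: "nat \<rightharpoonup> nat"
  assumes "n \<ge> 2"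
    and "S \<subseteq> sym_inv n - sym_grp n"
    and "subsemigroup S"
    and "semitransitive n S"
    and "card S \<le> 2 * n"
    and "e \<in> S" and "e \<cdot> e = e" and "e \<noteq> Map.empty"
    and "\<phi> \<in> corner e S"
  shows "\<phi> \<in> units_of_monoid (corner e S) e \<or> nilpotent_map \<phi>"
proof -
  interpret proper_semitransitive n S using assms(2-4) by unfold_locales
  have powers: "\<forall>k\<ge>1. ppow \<phi> k \<in> corner e S"
    using corner_powers[OF assms(3,6,7,9)] .
  obtain m where "m \<ge> 1" and idem: "ppow \<phi> m \<cdot> ppow \<phi> m = ppow \<phi> m"
    using idempotent_power[OF powers finite_subset[OF corner_subset[OF assms(3,6)] finite_S]] by blast
  have f: "ppow \<phi> m \<in> S" "dom (ppow \<phi> m) \<subseteq> dom e"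
    using powers \<open>m \<ge> 1\<close> corner_subset[OF assms(3,6)] dom_corner by blast+
  consider "ppow \<phi> m = Map.empty" | "ppow \<phi> m = e" | "ppow \<phi> m \<noteq> Map.empty" "ppow \<phi> m \<noteq> e"
    by blast
  then show ?thesis
  proof cases
    case 1
    then show ?thesis using \<open>m \<ge> 1\<close> unfolding nilpotent_map_def by blast
  next
    case 2
    then show ?thesis using unit_if_power_identity[OF powers \<open>m \<ge> 1\<close> _ assms(7)] by blast
  next
    case 3
    then show ?thesis using card_bound_nested_idempotents[OF assms(6,7) f(1) idem 3 f(2)] assms(5)
      by linarith
  qed
qed

end
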